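(* Let $n\geq 3$ and let $K_n$ be the complete graph on $n$ vertices. Then $\chi_{td}(\mathrm{cl}(K_n)) \leq 2\chi_{td}(K_n)$.
   Context: For a simple graph $G$ and a positive integer $k$, a proper $k$-total difference labeling of $G$ is a function $f: V(G)\to\{1,\dots,k\}$, extended to edges by $f(\{u,v\}) = |f(u)-f(v)|$, such that: (i) adjacent vertices receive different labels; (ii) two distinct edges sharing a vertex receive different labels; (iii) no edge receives the same label as either of its endpoints. $\chi_{td}(G)$ denotes the smallest $k$ for which such a labeling exists. The clone $\mathrm{cl}(G)$ of $G$ is the Cartesian product $G\,\square\, K_2$, i.e. two copies of $G$ with each vertex joined by an edge to its corresponding copy. *)

theory Defs
  imports Main
begin

text \<open>A simple graph is given by a vertex set V and a symmetric irreflexive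
edge relation E (only edges between vertices of V are considered).\<close>

definition edge_label :: "('a \<Rightarrow> nat) \<Rightarrow> 'a \<Rightarrow> 'a \<Rightarrow> nat" where
  "edge_label f u v = (if f u \<le> f v then f v - f u else f u - f v)"

definition proper_total_diff_labeling ::
  "'a set \<Rightarrow> ('a \<Rightarrow> 'a \<Rightarrow> bool) \<Rightarrow> nat \<Rightarrow> ('a \<Rightarrow> nat) \<Rightarrow> bool" where
  "proper_total_diff_labeling V E k f \<longleftrightarrow>
     (\<forall>v\<in>V. 1 \<le> f v \<and> f v \<le> k) \<and>
     (\<forall>u\<in>V. \<forall>v\<in>V. E u v \<longrightarrow> f u \<noteq> f v) \<and>
     (\<forall>u\<in>V. \<forall>v\<in>V. \<forall>w\<in>V. E u v \<and> E u w \<and> v \<noteq> w \<longrightarrow>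
        edge_label f u v \<noteq> edge_label f u w) \<and>
     (\<forall>u\<in>V. \<forall>v\<in>V. E u v \<longrightarrow> edge_label f u v \<noteq> f u \<and> edge_label f u v \<noteq> f v)"

definition chi_td :: "'a set \<Rightarrow> ('a \<Rightarrow> 'a \<Rightarrow> bool) \<Rightarrow> nat" where
  "chi_td V E = (LEAST k. k > 0 \<and> (\<exists>f. proper_total_diff_labeling V E k f))"

definition Kn_V :: "nat \<Rightarrow> nat set" where "Kn_V n = {0..<n}"
definition Kn_E :: "nat \<Rightarrow> nat \<Rightarrow> bool" where "Kn_E u v \<longleftrightarrow> u \<noteq> v"

text \<open>Clone cl(G) = G \<box> K_2, vertices V \<times> {False, True}.\<close>
definition clone_V :: "'a set \<Rightarrow> ('a \<times> bool) set" where
  "clone_V V = V \<times> UNIV"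
definition clone_E :: "('a \<Rightarrow> 'a \<Rightarrow> bool) \<Rightarrow> ('a \<times> bool) \<Rightarrow> ('a \<times> bool) \<Rightarrow> bool" where
  "clone_E E x y \<longleftrightarrow> (snd x = snd y \<and> E (fst x) (fst y)) \<or> (fst x = fst y \<and> snd x \<noteq> snd y)"

end

theory Submission
  imports Defs "HOL-Combinatorics.Transposition"
begin

text \<open>Give the two copies of a graph G in cl(G) the labels 2 f and 2 g - 1, where f and g are
proper labelings of G. Inside a copy all labels and differences are doubled (or doubled and
shifted), so edges inside a copy get even labels, while each rung joins an even and an odd label
and therefore gets an odd one; parity alone then separates rungs from the other edges at a vertex
and from the even endpoint. The only remaining clash, the rung label equalling its odd endpoint,
happens exactly when f v + 1 = 2 g v. For g = f this means f v = 1, so for K_n it suffices to take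
g = f composed with a transposition moving the vertex labelled 1.\<close>

lemma edge_label_comp [simp]: "edge_label (f \<circ> p) u v = edge_label f (p u) (p v)"
  by (simp add: edge_label_def)

lemma edge_label_commute: "edge_label f u v = edge_label f v u"
  unfolding edge_label_def by auto

lemma even_edge_label_iff: "even (edge_label f u v) \<longleftrightarrow> (even (f u) \<longleftrightarrow> even (f v))"
  unfolding edge_label_def by auto

lemma proper_total_diff_labelingI:
  assumes "\<And>v. v \<in> V \<Longrightarrow> 1 \<le> f v \<and> f v \<le> k"
    and "\<And>u v. u \<in> V \<Longrightarrow> v \<in> V \<Longrightarrow> E u v \<Longrightarrow> f u \<noteq> f v"
    and "\<And>u v w. u \<in> V \<Longrightarrow> v \<in> V \<Longrightarrow> w \<in> V \<Longrightarrow> E u v \<Longrightarrow> E u w \<Longrightarrow> v \<noteq> w \<Longrightarrow>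
           edge_label f u v \<noteq> edge_label f u w"
    and "\<And>u v. u \<in> V \<Longrightarrow> v \<in> V \<Longrightarrow> E u v \<Longrightarrow>
           edge_label f u v \<noteq> f u \<and> edge_label f u v \<noteq> f v"
  shows "proper_total_diff_labeling V E k f"
  using assms unfolding proper_total_diff_labeling_def by blast

lemma proper_total_diff_labelingD:
  assumes "proper_total_diff_labeling V E k f"
  shows "v \<in> V \<Longrightarrow> 1 \<le> f v"
    and "v \<in> V \<Longrightarrow> f v \<le> k"
    and "u \<in> V \<Longrightarrow> v \<in> V \<Longrightarrow> E u v \<Longrightarrow> f u \<noteq> f v"
    and "u \<in> V \<Longrightarrow> v \<in> V \<Longrightarrow> w \<in> V \<Longrightarrow> E u v \<Longrightarrow> E u w \<Longrightarrow> v \<noteq> w \<Longrightarrow>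
           edge_label f u v \<noteq> edge_label f u w"
    and "u \<in> V \<Longrightarrow> v \<in> V \<Longrightarrow> E u v \<Longrightarrow> edge_label f u v \<noteq> f u"
    and "u \<in> V \<Longrightarrow> v \<in> V \<Longrightarrow> E u v \<Longrightarrow> edge_label f u v \<noteq> f v"
  using assms unfolding proper_total_diff_labeling_def by blast+

lemma proper_total_diff_labeling_if_ratio_ge_3:
  assumes range: "\<And>v. v \<in> V \<Longrightarrow> 1 \<le> f v \<and> f v \<le> k"
    and ratio: "\<And>u v. u \<in> V \<Longrightarrow> v \<in> V \<Longrightarrow> u \<noteq> v \<Longrightarrow>
      3 * min (f u) (f v) \<le> max (f u) (f v)"
    and loopless: "\<And>v. \<not> E v v"
  shows "proper_total_diff_labeling V E k f"
proof (rule proper_total_diff_labelingI)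
  fix u v w assume uvw: "u \<in> V" "v \<in> V" "w \<in> V" and "E u v" "E u w" "v \<noteq> w"
  then have "u \<noteq> v" "u \<noteq> w" using loopless by auto
  have "f v \<noteq> f w" using range[of v] ratio[of v w] uvw \<open>v \<noteq> w\<close> by auto
  with uvw \<open>u \<noteq> v\<close> \<open>u \<noteq> w\<close> show "edge_label f u v \<noteq> edge_label f u w"
    using range[of u] range[of v] range[of w] ratio[of u v] ratio[of u w]
    unfolding edge_label_def by (simp add: min_def max_def split: if_splits)
next
  fix u v assume uv: "u \<in> V" "v \<in> V" and "E u v"
  then have "u \<noteq> v" using loopless by auto
  with uv show "f u \<noteq> f v" "edge_label f u v \<noteq> f u \<and> edge_label f u v \<noteq> f v"
    using range[of u] range[of v] ratio[of u v]
    unfolding edge_label_def by (auto simp add: min_def max_def split: if_splits)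
qed (use range in blast)

lemma proper_total_diff_labeling_comp:
  assumes f: "proper_total_diff_labeling V E k f"
    and p: "p ` V \<subseteq> V" "inj_on p V"
    and edges: "\<And>u v. u \<in> V \<Longrightarrow> v \<in> V \<Longrightarrow> E u v \<Longrightarrow> E (p u) (p v)"
  shows "proper_total_diff_labeling V E k (f \<circ> p)"
proof (rule proper_total_diff_labelingI)
  fix u v w assume uvw: "u \<in> V" "v \<in> V" "w \<in> V" "E u v" "E u w" "v \<noteq> w"
  have "edge_label f (p u) (p v) \<noteq> edge_label f (p u) (p w)"
  proof (rule proper_total_diff_labelingD(4)[OF f])
    show "p u \<in> V" "p v \<in> V" "p w \<in> V" using p uvw by auto
    show "E (p u) (p v)" "E (p u) (p w)" using edges uvw by auto
    show "p v \<noteq> p w" using inj_on_eq_iff[OF p(2)] uvw by auto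
  qed
  then show "edge_label (f \<circ> p) u v \<noteq> edge_label (f \<circ> p) u w" by simp
next
  fix u v assume "u \<in> V" "v \<in> V" "E u v"
  then have puv: "p u \<in> V" "p v \<in> V" "E (p u) (p v)" using p edges by auto
  show "(f \<circ> p) u \<noteq> (f \<circ> p) v"
    using proper_total_diff_labelingD(3)[OF f puv] by simp
  show "edge_label (f \<circ> p) u v \<noteq> (f \<circ> p) u \<and> edge_label (f \<circ> p) u v \<noteq> (f \<circ> p) v"
    using proper_total_diff_labelingD(5,6)[OF f puv] by simp
qed (use p proper_total_diff_labelingD(1,2)[OF f] in auto)

lemma clone_E_Pair [simp]:
  "clone_E E (a, s) (b, t) \<longleftrightarrow> (s = t \<and> E a b) \<or> (a = b \<and> s \<noteq> t)"
  by (simp add: clone_E_def)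

lemma Pair_mem_clone_V [simp]: "(a, s) \<in> clone_V V \<longleftrightarrow> a \<in> V"
  by (simp add: clone_V_def)

definition clone_labeling :: "('a \<Rightarrow> nat) \<Rightarrow> ('a \<Rightarrow> nat) \<Rightarrow> 'a \<times> bool \<Rightarrow> nat" where
  "clone_labeling f g x = (if snd x then 2 * g (fst x) - 1 else 2 * f (fst x))"

lemma clone_labeling_Pair [simp]:
  "clone_labeling f g (v, False) = 2 * f v"
  "clone_labeling f g (v, True) = 2 * g v - 1"
  by (simp_all add: clone_labeling_def)

locale rung_compatible_labelings =
  fixes V :: "'a set" and E :: "'a \<Rightarrow> 'a \<Rightarrow> bool" and k :: nat and f g :: "'a \<Rightarrow> nat"
  assumes f: "proper_total_diff_labeling V E k f"
    and g: "proper_total_diff_labeling V E k g"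
    and no_rung_clash: "\<And>v. v \<in> V \<Longrightarrow> f v + 1 \<noteq> 2 * g v"
begin

abbreviation h :: "'a \<times> bool \<Rightarrow> nat" where "h \<equiv> clone_labeling f g"

lemma odd_label_iff:
  assumes "a \<in> V"
  shows "odd (h (a, s)) \<longleftrightarrow> s"
  using proper_total_diff_labelingD(1)[OF g assms] by (cases s) auto

lemma odd_edge_label_iff:
  "a \<in> V \<Longrightarrow> b \<in> V \<Longrightarrow> odd (edge_label h (a, s) (b, t)) \<longleftrightarrow> s \<noteq> t"
  using odd_label_iff[of a s] odd_label_iff[of b t] unfolding even_edge_label_iff by blast

lemma copy_labeling: "proper_total_diff_labeling V E k (if s then g else f)"
  using f g by simp

lemma edge_label_same_copy:
  assumes "a \<in> V" "b \<in> V"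
  shows "edge_label h (a, s) (b, s) = 2 * edge_label (if s then g else f) a b"
  using proper_total_diff_labelingD(1)[OF g assms(1)] proper_total_diff_labelingD(1)[OF g assms(2)]
  by (cases s) (auto simp: edge_label_def)

lemma edge_label_rung_ne_label:
  assumes "a \<in> V"
  shows "edge_label h (a, s) (a, \<not> s) \<noteq> h (a, s)"
proof (cases s)
  case True
  then show ?thesis
    using proper_total_diff_labelingD(1)[OF f assms] proper_total_diff_labelingD(1)[OF g assms]
      no_rung_clash[OF assms]
    by (auto simp: edge_label_def)
next
  case False
  then show ?thesis
    using odd_edge_label_iff[OF assms assms, of s "\<not> s"] odd_label_iff[OF assms, of s] by auto
qed

lemma adjacent_labels_ne:
  assumes ab: "a \<in> V" "b \<in> V" and "clone_E E (a, s) (b, t)"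
  shows "h (a, s) \<noteq> h (b, t)"
proof -
  consider "s = t" "E a b" | "a = b" "s \<noteq> t" using assms(3) by auto
  then show ?thesis
  proof cases
    case 1
    then show ?thesis
      using proper_total_diff_labelingD(3)[OF copy_labeling ab \<open>E a b\<close>, of s]
        proper_total_diff_labelingD(1)[OF g ab(1)] proper_total_diff_labelingD(1)[OF g ab(2)]
      by (cases s) auto
  next
    case 2
    then show ?thesis using odd_label_iff ab by metis
  qed
qed

text \<open>Parity of an edge label tells whether the edge is a rung, and each vertex has only one rung.\<close>
lemma incident_edge_labels_ne:
  assumes abc: "a \<in> V" "b \<in> V" "c \<in> V"
    and ab: "clone_E E (a, s) (b, t)" and ac: "clone_E E (a, s) (c, r)" and "(b, t) \<noteq> (c, r)"
  shows "edge_label h (a, s) (b, t) \<noteq> edge_label h (a, s) (c, r)"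
proof
  assume eq: "edge_label h (a, s) (b, t) = edge_label h (a, s) (c, r)"
  then have "t = r" using odd_edge_label_iff abc by metis
  with \<open>(b, t) \<noteq> (c, r)\<close> ab ac have "t = s" "r = s" "E a b" "E a c" "b \<noteq> c" by auto
  then show False
    using eq proper_total_diff_labelingD(4)[OF copy_labeling abc]
    by (simp add: edge_label_same_copy abc)
qed

lemma edge_label_ne_endpoint_labels:
  assumes ab: "a \<in> V" "b \<in> V" and "clone_E E (a, s) (b, t)"
  shows "edge_label h (a, s) (b, t) \<noteq> h (a, s) \<and> edge_label h (a, s) (b, t) \<noteq> h (b, t)"
proof -
  consider "s = t" "E a b" "\<not> s" | "s = t" "E a b" "s" | "a = b" "t = (\<not> s)"
    using assms(3) by auto
  then show ?thesis
  proof cases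
    case 1
    then show ?thesis
      using edge_label_same_copy[OF ab] proper_total_diff_labelingD(5,6)[OF f ab \<open>E a b\<close>] by simp
  next
    case 2
    then have "even (edge_label h (a, s) (b, t))" "odd (h (a, s))" "odd (h (b, t))"
      using odd_edge_label_iff[OF ab, of s t] odd_label_iff[OF ab(1), of s]
        odd_label_iff[OF ab(2), of t]
      by blast+
    then show ?thesis by auto
  next
    case 3
    then show ?thesis
      using edge_label_rung_ne_label[OF ab(1), of s] edge_label_rung_ne_label[OF ab(1), of "\<not> s"]
      by (auto simp: edge_label_commute)
  qed
qed

theorem proper_clone_labeling:
  "proper_total_diff_labeling (clone_V V) (clone_E E) (2 * k) h"
proof (rule proper_total_diff_labelingI, unfold split_paired_all Pair_mem_clone_V)
  fix a s assume "a \<in> V"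
  then show "1 \<le> h (a, s) \<and> h (a, s) \<le> 2 * k"
    using proper_total_diff_labelingD(1,2)[OF f \<open>a \<in> V\<close>]
      proper_total_diff_labelingD(1,2)[OF g \<open>a \<in> V\<close>]
    by (cases s) auto
next
  fix a s b t
  assume "a \<in> V" "b \<in> V" "clone_E E (a, s) (b, t)"
  then show "h (a, s) \<noteq> h (b, t)" by (rule adjacent_labels_ne)
next
  fix a s b t c r
  assume "a \<in> V" "b \<in> V" "c \<in> V"
    "clone_E E (a, s) (b, t)" "clone_E E (a, s) (c, r)" "(b, t) \<noteq> (c, r)"
  then show "edge_label h (a, s) (b, t) \<noteq> edge_label h (a, s) (c, r)"
    by (rule incident_edge_labels_ne)
next
  fix a s b t
  assume "a \<in> V" "b \<in> V" "clone_E E (a, s) (b, t)"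
  then show "edge_label h (a, s) (b, t) \<noteq> h (a, s) \<and> edge_label h (a, s) (b, t) \<noteq> h (b, t)"
    by (rule edge_label_ne_endpoint_labels)
qed

end

lemma chi_td_le:
  assumes "proper_total_diff_labeling V E k f" and "0 < k"
  shows "chi_td V E \<le> k"
  unfolding chi_td_def using assms by (intro Least_le) blast

lemma chi_td_labeling:
  assumes "proper_total_diff_labeling V E k f" and "0 < k"
  obtains g where "0 < chi_td V E" and "proper_total_diff_labeling V E (chi_td V E) g"
  using LeastI[of "\<lambda>k. 0 < k \<and> (\<exists>f. proper_total_diff_labeling V E k f)" k] assms
  unfolding chi_td_def by blast

text \<open>Only needed to know that the LEAST in chi_td of K_n is attained; over an empty set it
would be an unspecified number.\<close>
lemma proper_total_diff_labeling_Kn_pow3: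
  "proper_total_diff_labeling (Kn_V n) Kn_E (3 ^ n) (\<lambda>i. 3 ^ i)"
proof (rule proper_total_diff_labeling_if_ratio_ge_3)
  fix v assume "v \<in> Kn_V n"
  then show "1 \<le> (3::nat) ^ v \<and> (3::nat) ^ v \<le> 3 ^ n"
    by (simp add: Kn_V_def power_increasing)
next
  have gap: "3 * 3 ^ i \<le> (3::nat) ^ j" if "i < j" for i j
    using power_increasing[of "Suc i" j "3::nat"] that by simp
  fix u v :: nat assume "u \<noteq> v"
  then show "3 * min (3 ^ u) (3 ^ v) \<le> max ((3::nat) ^ u) (3 ^ v)"
    using gap[of u v] gap[of v u] by (cases "u < v") (simp_all add: min_def max_def)
qed (simp add: Kn_E_def)

lemma Kn_rung_compatible_labeling:
  assumes f: "proper_total_diff_labeling (Kn_V n) Kn_E k f" and "2 \<le> n"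
  obtains g where "proper_total_diff_labeling (Kn_V n) Kn_E k g"
    and "\<And>v. v \<in> Kn_V n \<Longrightarrow> f v + 1 \<noteq> 2 * g v"
proof (cases "\<exists>v0 \<in> Kn_V n. f v0 = 1")
  case True
  then obtain v0 where v0: "v0 \<in> Kn_V n" "f v0 = 1" by blast
  define u :: nat where "u = (if v0 = 0 then 1 else 0)"
  have u: "u \<in> Kn_V n" "u \<noteq> v0" using \<open>2 \<le> n\<close> by (auto simp: u_def Kn_V_def)
  have label_one: "w = v0" if "w \<in> Kn_V n" "f w = 1" for w
    using proper_total_diff_labelingD(3)[OF f that(1) v0(1)] that v0 by (auto simp: Kn_E_def)
  let ?p = "transpose v0 u"
  show thesis
  proof (rule that)
    show "proper_total_diff_labeling (Kn_V n) Kn_E k (f \<circ> ?p)"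
      using v0 u by (intro proper_total_diff_labeling_comp[OF f])
        (auto simp: Kn_E_def inj_eq[OF inj_transpose])
    fix v assume v: "v \<in> Kn_V n"
    show "f v + 1 \<noteq> 2 * (f \<circ> ?p) v"
      using label_one[OF u(1)] label_one[OF v] u(2) by (cases "v = v0 \<or> v = u") (auto simp: v0)
  qed
next
  case False
  then show thesis by (intro that[OF f]) auto
qed

theorem mainTheorem10:
  fixes n :: nat
  assumes "n \<ge> 3"
  shows "chi_td (clone_V (Kn_V n)) (clone_E Kn_E) \<le> 2 * chi_td (Kn_V n) Kn_E"
proof -
  obtain f where pos: "0 < chi_td (Kn_V n) Kn_E"
    and f: "proper_total_diff_labeling (Kn_V n) Kn_E (chi_td (Kn_V n) Kn_E) f"
    using chi_td_labeling[OF proper_total_diff_labeling_Kn_pow3] by auto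
  obtain g where "proper_total_diff_labeling (Kn_V n) Kn_E (chi_td (Kn_V n) Kn_E) g"
    and "\<And>v. v \<in> Kn_V n \<Longrightarrow> f v + 1 \<noteq> 2 * g v"
    using Kn_rung_compatible_labeling[OF f] assms by auto
  with f have "rung_compatible_labelings (Kn_V n) Kn_E (chi_td (Kn_V n) Kn_E) f g"
    by unfold_locales
  then have "proper_total_diff_labeling (clone_V (Kn_V n)) (clone_E Kn_E)
      (2 * chi_td (Kn_V n) Kn_E) (clone_labeling f g)"
    by (rule rung_compatible_labelings.proper_clone_labeling)
  then show ?thesis by (rule chi_td_le) (simp add: pos)
qed

end
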